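(* Let $\Omega\subset\mathbb{R}^d$ be nonempty, convex and compact with diameter $D$ (i.e. $\|x-y\|\le D$ for all $x,y\in\Omega$). Let $z$ be a random variable with distribution $\mathcal{P}$ supported on $\Xi\subset\mathbb{R}^p$, let $f(\cdot,z)$ be differentiable for each $z\in\Xi$ with $\|\nabla f(x,z)\|\le G$ for all $x\in\Omega$, $z\in\Xi$, and let $F(x)=\mathbb{E}_z[f(x,z)]$ be differentiable with $\nabla F(x)=\mathbb{E}_z[\nabla f(x,z)]$ and $L$-smooth on $\Omega$. Let $x^*\in\arg\min_{x\in\Omega}F(x)$, $x_0\in\Omega$, $T\ge 1$ an integer and $\beta\ge \frac{2(F(x_0)-F(x^* ))}{LD^2}$, $\beta>0$. Run the algorithm SFW (defined in the context) with constant step size $\gamma_t=\gamma=\sqrt{\frac{2(F(x_0)-F(x^* ))}{TLD^2\beta}}$ and minibatch sizes $b_t=b=T$ for all $t\in\{0,\dots,T-1\}$. Then its output $x_a$ satisfies $$\mathbb{E}[\mathcal{G}(x_a)]\le \frac{D}{\sqrt{T}}\left(G+\sqrt{\frac{2L(F(x_0)-F(x^* ))}{\beta}}\,(1+\beta)\right).$$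
   Context: $F$ is $L$-smooth on $\Omega$ means $\|\nabla F(x)-\nabla F(y)\|\le L\|x-y\|$ for all $x,y\in\Omega$; $\|\cdot\|$ is the Euclidean norm. The Frank–Wolfe gap is $\mathcal{G}(x)=\max_{v\in\Omega}\langle v-x,-\nabla F(x)\rangle$. Algorithm SFW (input $x_0\in\Omega$, $T$, step sizes $\gamma_t\in[0,1]$, minibatch sizes $b_t$): for $t=0,\dots,T-1$, draw i.i.d. samples $z_1^t,\dots,z_{b_t}^t\sim\mathcal{P}$ (independent of everything before), compute $v_t\in\arg\max_{v\in\Omega}\langle v,-\frac{1}{b_t}\sum_{i=1}^{b_t}\nabla f(x_t,z_i^t)\rangle$, and set $x_{t+1}=x_t+\gamma_t(v_t-x_t)$. The output $x_a$ is chosen uniformly at random from $\{x_0,\dots,x_{T-1}\}$. The expectation is over all randomness of the algorithm. *)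

theory Defs
  imports "HOL-Probability.Probability"
begin

definition fw_gap :: "('a::real_inner) set \<Rightarrow> ('a \<Rightarrow> 'a) \<Rightarrow> 'a \<Rightarrow> real" where
  "fw_gap \<Omega> gF x = (SUP v\<in>\<Omega>. inner (v - x) (- gF x))"

text \<open>The sample outcome omega assigns to (t,i) the i-th sample
  z_i^t of round t.  lmo t c is the chosen maximiser of <v, c> over Omega used in
  round t; gf x z is the stochastic gradient of f(.,z) at x.\<close>
fun sfw_iter :: "(nat \<Rightarrow> 'a \<Rightarrow> 'a) \<Rightarrow> ('a \<Rightarrow> 'z \<Rightarrow> 'a) \<Rightarrow> 'a \<Rightarrow> (nat \<Rightarrow> real)
    \<Rightarrow> (nat \<Rightarrow> nat) \<Rightarrow> (nat \<times> nat \<Rightarrow> 'z) \<Rightarrow> nat \<Rightarrow> 'a::real_vector" where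
  "sfw_iter lmo gf x0 \<gamma> b \<omega> 0 = x0"
| "sfw_iter lmo gf x0 \<gamma> b \<omega> (Suc t) =
     (let x = sfw_iter lmo gf x0 \<gamma> b \<omega> t;
          g = (1 / real (b t)) *\<^sub>R (\<Sum>i<b t. gf x (\<omega> (t, i)))
      in x + \<gamma> t *\<^sub>R (lmo t (- g) - x))"

definition sfw_samples :: "nat \<Rightarrow> (nat \<Rightarrow> nat) \<Rightarrow> 'z measure \<Rightarrow> (nat \<times> nat \<Rightarrow> 'z) measure" where
  "sfw_samples T b P = PiM (SIGMA t:{..<T}. {..<b t}) (\<lambda>_. P)"

end

theory Submission
  imports Defs
begin

(* Each SFW step decreases F by at least gamma times the Frank-Wolfe gap, up to a curvature
   term L gamma^2 D^2 / 2 from L-smoothness and an error term D * norm (gF x_t - g_t) from the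
   minibatch estimate g_t.  Conditionally on the earlier rounds, g_t is the mean of b_t i.i.d.
   vectors bounded by G, so its expected error is at most G / sqrt b_t.  Summing over t, the
   F-values telescope to (F x_0 - F x^* ) / gamma, and the prescribed gamma balances this
   against the curvature terms. *)

lemma (in prob_space) expectation_le_sqrt_second_moment:
  fixes X :: "'a \<Rightarrow> real"
  assumes "X \<in> borel_measurable M" and "integrable M (\<lambda>x. (X x)\<^sup>2)"
  shows "expectation X \<le> sqrt (expectation (\<lambda>x. (X x)\<^sup>2))"
proof -
  have "integrable M X" using assms by (rule square_integrable_imp_integrable)
  then have "(expectation X)\<^sup>2 \<le> expectation (\<lambda>x. (X x)\<^sup>2)"
    using variance_positive[of X] variance_eq[of X] assms(2) by simp
  then show ?thesis by (simp add: real_le_rsqrt)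
qed

lemma (in prob_space) variance_le_second_moment:
  fixes X :: "'a \<Rightarrow> real"
  assumes "integrable M X" and "integrable M (\<lambda>x. (X x)\<^sup>2)"
  shows "variance X \<le> expectation (\<lambda>x. (X x)\<^sup>2)"
  using variance_eq[OF assms] by simp

lemma integral_square_sum_iid_centered:
  fixes P :: "'z measure" and u :: "'z \<Rightarrow> real" and J :: "'i set"
  assumes P: "prob_space P" and J: "finite J"
    and u_meas: "u \<in> borel_measurable P" and u2_int: "integrable P (\<lambda>z. (u z)\<^sup>2)"
    and u_mean: "(\<integral>z. u z \<partial>P) = 0"
  shows "integrable (PiM J (\<lambda>_. P)) (\<lambda>y. (\<Sum>j\<in>J. u (y j))\<^sup>2)"
    and "(\<integral>y. (\<Sum>j\<in>J. u (y j))\<^sup>2 \<partial>PiM J (\<lambda>_. P)) = real (card J) * (\<integral>z. (u z)\<^sup>2 \<partial>P)"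
proof -
  interpret P: prob_space P by fact
  interpret product_sigma_finite "\<lambda>_::'i. P"
    unfolding product_sigma_finite_def using P.sigma_finite_measure_axioms by simp
  have u_int: "integrable P u" using u_meas u2_int by (rule P.square_integrable_imp_integrable)
  text \<open>Expand the square as a double sum of products of independent factors: the factor
    of coordinate i is u if i is one of the two summation indices j, l, and 1 otherwise.\<close>
  define f :: "'i \<Rightarrow> 'i \<Rightarrow> 'i \<Rightarrow> 'z \<Rightarrow> real"
    where "f j l i z = (if i = j then u z else 1) * (if i = l then u z else 1)" for j l i z
  have f_int: "integrable P (f j l i)" for j l i
    using u_int u2_int unfolding f_def by (cases "i = j"; cases "i = l") (auto simp: power2_eq_square)
  have f_integral: "integral\<^sup>L P (f j l i) =
      (if i = j \<and> i = l then \<integral>z. (u z)\<^sup>2 \<partial>P else if i = j \<or> i = l then 0 else 1)" for j l i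
    using u_mean unfolding f_def by (cases "i = j"; cases "i = l") (auto simp: power2_eq_square P.prob_space)
  have square_eq: "(\<Sum>j\<in>J. u (y j))\<^sup>2 = (\<Sum>j\<in>J. \<Sum>l\<in>J. \<Prod>i\<in>J. f j l i (y i))" for y
    unfolding power2_eq_square sum_product f_def using J
    by (intro sum.cong refl) (simp add: prod.distrib prod.delta)
  have prod_int: "integrable (PiM J (\<lambda>_. P)) (\<lambda>y. \<Prod>i\<in>J. f j l i (y i))" for j l
    by (rule product_integrable_prod) (use J f_int in auto)
  show "integrable (PiM J (\<lambda>_. P)) (\<lambda>y. (\<Sum>j\<in>J. u (y j))\<^sup>2)"
    unfolding square_eq by (auto intro!: Bochner_Integration.integrable_sum prod_int)
  have "(\<integral>y. (\<Sum>j\<in>J. u (y j))\<^sup>2 \<partial>PiM J (\<lambda>_. P)) = (\<Sum>j\<in>J. \<Sum>l\<in>J. \<Prod>i\<in>J. integral\<^sup>L P (f j l i))"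
    unfolding square_eq by (simp add: integral_sum prod_int integrable_sum product_integral_prod J f_int)
  also have "\<dots> = (\<Sum>j\<in>J. \<Sum>l\<in>J. if j = l then \<integral>z. (u z)\<^sup>2 \<partial>P else 0)"
  proof (intro sum.cong refl)
    fix j l assume jl: "j \<in> J" "l \<in> J"
    show "(\<Prod>i\<in>J. integral\<^sup>L P (f j l i)) = (if j = l then \<integral>z. (u z)\<^sup>2 \<partial>P else 0)"
    proof (cases "j = l")
      case True
      then have "(\<Prod>i\<in>J. integral\<^sup>L P (f j l i)) = (\<Prod>i\<in>J. if i = j then \<integral>z. (u z)\<^sup>2 \<partial>P else 1)"
        by (intro prod.cong refl) (simp add: f_integral)
      then show ?thesis using J jl True by simp
    next
      case False
      then show ?thesis using J jl by (auto simp: f_integral intro!: prod_zero bexI[of _ j])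
    qed
  qed
  also have "\<dots> = real (card J) * (\<integral>z. (u z)\<^sup>2 \<partial>P)"
    using J by simp
  finally show "(\<integral>y. (\<Sum>j\<in>J. u (y j))\<^sup>2 \<partial>PiM J (\<lambda>_. P)) = real (card J) * (\<integral>z. (u z)\<^sup>2 \<partial>P)" .
qed

lemma power2_norm_eq_sum_Basis:
  fixes x :: "'a::euclidean_space"
  shows "(norm x)\<^sup>2 = (\<Sum>b\<in>Basis. (inner x b)\<^sup>2)"
  unfolding power2_norm_eq_inner by (subst euclidean_inner) (simp add: power2_eq_square)

lemma integral_norm_sq_centered_sum_iid:
  fixes P :: "'z measure" and g :: "'z \<Rightarrow> 'a::euclidean_space" and J :: "'i set"
  assumes P: "prob_space P" and J: "finite J"
    and g_meas [measurable]: "g \<in> borel_measurable P" and g_bound: "AE z in P. norm (g z) \<le> B"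
  shows "integrable (PiM J (\<lambda>_. P)) (\<lambda>y. (norm (\<Sum>j\<in>J. g (y j) - (\<integral>z. g z \<partial>P)))\<^sup>2)"
    and "(\<integral>y. (norm (\<Sum>j\<in>J. g (y j) - (\<integral>z. g z \<partial>P)))\<^sup>2 \<partial>PiM J (\<lambda>_. P)) \<le> real (card J) * B\<^sup>2"
proof -
  interpret P: prob_space P by fact
  define m where "m = (\<integral>z. g z \<partial>P)"
  define u where "u b z = inner (g z) b - inner m b" for b z
  have g_int: "integrable P g" by (rule P.integrable_const_bound[OF g_bound g_meas])
  have gb_int: "integrable P (\<lambda>z. inner (g z) b)" for b
    using g_int by (rule integrable_inner_left)
  have gb_mean: "(\<integral>z. inner (g z) b \<partial>P) = inner m b" for b
    unfolding m_def using g_int by (rule integral_inner_left)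
  have gb_sq_int: "integrable P (\<lambda>z. (inner (g z) b)\<^sup>2)" if "b \<in> Basis" for b
  proof (rule P.integrable_const_bound[where B="B\<^sup>2"])
    show "AE z in P. norm ((inner (g z) b)\<^sup>2) \<le> B\<^sup>2"
      using g_bound
    proof eventually_elim
      case (elim z)
      have "\<bar>inner (g z) b\<bar> \<le> \<bar>B\<bar>"
        using order_trans[OF Basis_le_norm[OF that] elim] by simp
      then show ?case by (simp add: abs_le_square_iff)
    qed
  qed measurable
  have u_meas: "u b \<in> borel_measurable P" for b
    unfolding u_def by measurable
  have u_sq_int: "integrable P (\<lambda>z. (u b z)\<^sup>2)" if "b \<in> Basis" for b
    using gb_int gb_sq_int[OF that] by (simp add: u_def power2_diff)
  have u_mean: "(\<integral>z. u b z \<partial>P) = 0" for b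
    using gb_int gb_mean by (simp add: u_def P.prob_space)
  have u_sq_le: "(\<integral>z. (u b z)\<^sup>2 \<partial>P) \<le> (\<integral>z. (inner (g z) b)\<^sup>2 \<partial>P)" if "b \<in> Basis" for b
    using P.variance_le_second_moment[OF gb_int gb_sq_int[OF that]] by (simp add: u_def gb_mean)
  have second_moment_g: "(\<Sum>b\<in>Basis. \<integral>z. (inner (g z) b)\<^sup>2 \<partial>P) \<le> B\<^sup>2"
  proof -
    have "(\<Sum>b\<in>Basis. \<integral>z. (inner (g z) b)\<^sup>2 \<partial>P) = (\<integral>z. (norm (g z))\<^sup>2 \<partial>P)"
      using gb_sq_int by (simp add: integral_sum[symmetric] power2_norm_eq_sum_Basis)
    also have "\<dots> \<le> (\<integral>z. B\<^sup>2 \<partial>P)"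
      by (rule integral_mono_AE') (use g_bound in \<open>auto elim!: eventually_mono intro: power_mono\<close>)
    finally show ?thesis by (simp add: P.prob_space)
  qed
  have sq_eq: "(norm (\<Sum>j\<in>J. g (y j) - m))\<^sup>2 = (\<Sum>b\<in>Basis. (\<Sum>j\<in>J. u b (y j))\<^sup>2)" for y
    by (simp add: power2_norm_eq_sum_Basis u_def inner_sum_left inner_diff_left)
  have sum_u_sq_int: "integrable (PiM J (\<lambda>_. P)) (\<lambda>y. (\<Sum>j\<in>J. u b (y j))\<^sup>2)" if "b \<in> Basis" for b
    by (rule integral_square_sum_iid_centered(1)[OF P J u_meas u_sq_int[OF that] u_mean])
  show "integrable (PiM J (\<lambda>_. P)) (\<lambda>y. (norm (\<Sum>j\<in>J. g (y j) - (\<integral>z. g z \<partial>P)))\<^sup>2)"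
    unfolding m_def[symmetric] sq_eq by (intro Bochner_Integration.integrable_sum sum_u_sq_int)
  have "(\<integral>y. (norm (\<Sum>j\<in>J. g (y j) - m))\<^sup>2 \<partial>PiM J (\<lambda>_. P))
      = (\<Sum>b\<in>Basis. \<integral>y. (\<Sum>j\<in>J. u b (y j))\<^sup>2 \<partial>PiM J (\<lambda>_. P))"
    unfolding sq_eq by (simp add: integral_sum sum_u_sq_int)
  also have "\<dots> = (\<Sum>b\<in>Basis. real (card J) * (\<integral>z. (u b z)\<^sup>2 \<partial>P))"
    by (intro sum.cong refl integral_square_sum_iid_centered(2)[OF P J u_meas u_sq_int u_mean])
  also have "\<dots> \<le> (\<Sum>b\<in>Basis. real (card J) * (\<integral>z. (inner (g z) b)\<^sup>2 \<partial>P))"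
    using u_sq_le by (intro sum_mono mult_left_mono) auto
  also have "\<dots> \<le> real (card J) * B\<^sup>2"
    using second_moment_g by (simp add: sum_distrib_left[symmetric] mult_left_mono)
  finally show "(\<integral>y. (norm (\<Sum>j\<in>J. g (y j) - (\<integral>z. g z \<partial>P)))\<^sup>2 \<partial>PiM J (\<lambda>_. P)) \<le> real (card J) * B\<^sup>2"
    unfolding m_def .
qed

lemma integral_norm_sample_mean_deviation:
  fixes P :: "'z measure" and g :: "'z \<Rightarrow> 'a::euclidean_space" and J :: "'i set"
  assumes P: "prob_space P" and J: "finite J" "J \<noteq> {}"
    and g_meas [measurable]: "g \<in> borel_measurable P" and g_bound: "AE z in P. norm (g z) \<le> B"
  shows "(\<integral>y. norm ((\<integral>z. g z \<partial>P) - (1 / real (card J)) *\<^sub>R (\<Sum>j\<in>J. g (y j))) \<partial>PiM J (\<lambda>_. P))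
           \<le> B / sqrt (real (card J))"
proof -
  interpret PJ: prob_space "PiM J (\<lambda>_. P)" by (rule prob_space_PiM) (rule P)
  define m where "m = (\<integral>z. g z \<partial>P)"
  define n where "n = real (card J)"
  define S where "S y = (\<Sum>j\<in>J. g (y j) - m)" for y :: "'i \<Rightarrow> 'z"
  have n_pos: "n > 0" using J by (simp add: n_def card_gt_0_iff)
  have B_nonneg: "B \<ge> 0"
  proof -
    have "AE z in P. 0 \<le> B" using g_bound by eventually_elim (meson norm_ge_zero order_trans)
    then show ?thesis using prob_space.AE_const[OF P] by simp
  qed
  note S_second_moment = integral_norm_sq_centered_sum_iid[OF P J(1) g_meas g_bound,
      folded m_def, folded S_def n_def]
  have "(\<integral>y. norm (S y) \<partial>PiM J (\<lambda>_. P)) \<le> sqrt (\<integral>y. (norm (S y))\<^sup>2 \<partial>PiM J (\<lambda>_. P))"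
    by (rule PJ.expectation_le_sqrt_second_moment[OF _ S_second_moment(1)]) (unfold S_def, measurable)
  also have "\<dots> \<le> sqrt (n * B\<^sup>2)"
    using S_second_moment(2) by simp
  also have "\<dots> = sqrt n * B"
    using B_nonneg by (simp add: real_sqrt_mult)
  finally have mean_norm_S: "(\<integral>y. norm (S y) \<partial>PiM J (\<lambda>_. P)) \<le> sqrt n * B" .
  have "norm (m - (1 / n) *\<^sub>R (\<Sum>j\<in>J. g (y j))) = norm (S y) / n" for y
  proof -
    have "S y = (\<Sum>j\<in>J. g (y j)) - n *\<^sub>R m"
      by (simp add: S_def sum_subtractf n_def sum_constant_scaleR del: sum_constant)
    then have "m - (1 / n) *\<^sub>R (\<Sum>j\<in>J. g (y j)) = - ((1 / n) *\<^sub>R S y)"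
      using n_pos by (simp add: scaleR_diff_right)
    then show ?thesis using n_pos by simp
  qed
  then have "(\<integral>y. norm (m - (1 / n) *\<^sub>R (\<Sum>j\<in>J. g (y j))) \<partial>PiM J (\<lambda>_. P))
      = (\<integral>y. norm (S y) \<partial>PiM J (\<lambda>_. P)) / n"
    by simp
  also have "\<dots> \<le> sqrt n * B / n"
    using mean_norm_S n_pos by (simp add: divide_right_mono)
  also have "\<dots> = B / sqrt n"
    using n_pos by (simp add: field_simps)
  finally show ?thesis unfolding m_def n_def .
qed

lemma smooth_descent:
  fixes F :: "'a::real_inner \<Rightarrow> real" and gF :: "'a \<Rightarrow> 'a"
  assumes "convex \<Omega>" and F_deriv: "\<And>x. (F has_derivative (\<lambda>h. inner (gF x) h)) (at x)"
    and smooth: "\<And>x y. x \<in> \<Omega> \<Longrightarrow> y \<in> \<Omega> \<Longrightarrow> norm (gF x - gF y) \<le> L * norm (x - y)"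
    and x: "x \<in> \<Omega>" and y: "y \<in> \<Omega>"
  shows "F y \<le> F x + inner (gF x) (y - x) + L / 2 * (norm (y - x))\<^sup>2"
proof -
  define v where "v = y - x"
  define \<phi> where "\<phi> s = F (x + s *\<^sub>R v) - s * inner (gF x) v - L / 2 * s\<^sup>2 * (norm v)\<^sup>2" for s
  have F_line_deriv: "((\<lambda>s. F (x + s *\<^sub>R v)) has_real_derivative inner (gF (x + s *\<^sub>R v)) v) (at s)" for s
  proof -
    have "((\<lambda>s. F (x + s *\<^sub>R v)) has_derivative (\<lambda>h. inner (gF (x + s *\<^sub>R v)) (h *\<^sub>R v))) (at s)"
      by (rule has_derivative_compose[OF _ F_deriv]) (auto intro!: derivative_eq_intros)
    moreover have "(\<lambda>h. inner (gF (x + s *\<^sub>R v)) (h *\<^sub>R v)) = (*) (inner (gF (x + s *\<^sub>R v)) v)"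
      by (rule ext) simp
    ultimately show ?thesis by (simp add: has_field_derivative_def)
  qed
  have \<phi>_deriv: "(\<phi> has_real_derivative
      inner (gF (x + s *\<^sub>R v)) v - inner (gF x) v - L * s * (norm v)\<^sup>2) (at s)" for s
    unfolding \<phi>_def by (rule derivative_eq_intros F_line_deriv refl | simp)+
  have "\<phi> 1 \<le> \<phi> 0"
  proof (rule DERIV_nonpos_imp_nonincreasing[of 0 1])
    fix s :: real assume s: "0 \<le> s" "s \<le> 1"
    have "x + s *\<^sub>R v = (1 - s) *\<^sub>R x + s *\<^sub>R y" by (simp add: v_def algebra_simps)
    then have xs: "x + s *\<^sub>R v \<in> \<Omega>" using convexD_alt[OF \<open>convex \<Omega>\<close> x y] s by simp
    have "inner (gF (x + s *\<^sub>R v)) v - inner (gF x) v = inner (gF (x + s *\<^sub>R v) - gF x) v"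
      by (simp add: inner_diff_left)
    also have "\<dots> \<le> norm (gF (x + s *\<^sub>R v) - gF x) * norm v" by (rule norm_cauchy_schwarz)
    also have "\<dots> \<le> L * norm (x + s *\<^sub>R v - x) * norm v"
      by (intro mult_right_mono smooth xs x) simp
    also have "\<dots> = L * s * (norm v)\<^sup>2" using s by (simp add: power2_eq_square)
    finally show "\<exists>y. (\<phi> has_real_derivative y) (at s) \<and> y \<le> 0"
      using \<phi>_deriv by (intro exI conjI) auto
  qed simp
  then show ?thesis by (simp add: \<phi>_def v_def)
qed

lemma fw_gap_le:
  assumes "\<Omega> \<noteq> {}" and "\<And>v. v \<in> \<Omega> \<Longrightarrow> inner (v - x) (- gF x) \<le> c"
  shows "fw_gap \<Omega> gF x \<le> c"
  unfolding fw_gap_def using assms by (intro cSUP_least) auto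

text \<open>Boundedness is needed: on the reals, SUP of a set that is unbounded above is an
  unspecified value.\<close>
lemma fw_gap_nonneg:
  assumes "x \<in> \<Omega>" and "bounded \<Omega>"
  shows "0 \<le> fw_gap \<Omega> gF x"
proof -
  obtain R where R: "\<And>v. v \<in> \<Omega> \<Longrightarrow> norm v \<le> R"
    using \<open>bounded \<Omega>\<close> by (auto simp: bounded_iff)
  have "bdd_above ((\<lambda>v. inner (v - x) (- gF x)) ` \<Omega>)"
  proof (rule bdd_aboveI2)
    fix v assume "v \<in> \<Omega>"
    have "inner (v - x) (- gF x) \<le> norm (v - x) * norm (gF x)"
      using norm_cauchy_schwarz[of "v - x" "- gF x"] by simp
    also have "\<dots> \<le> (R + norm x) * norm (gF x)"
      using R[OF \<open>v \<in> \<Omega>\<close>] norm_triangle_ineq4[of v x] by (intro mult_right_mono) auto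
    finally show "inner (v - x) (- gF x) \<le> (R + norm x) * norm (gF x)" .
  qed
  then have "inner (x - x) (- gF x) \<le> fw_gap \<Omega> gF x"
    unfolding fw_gap_def using assms(1) by (rule cSUP_upper2) simp
  then show ?thesis by simp
qed

lemma fw_gap_nonpos_at_minimum:
  fixes F :: "'a::real_inner \<Rightarrow> real" and gF :: "'a \<Rightarrow> 'a"
  assumes "convex \<Omega>" and F_deriv: "\<And>x. (F has_derivative (\<lambda>h. inner (gF x) h)) (at x)"
    and smooth: "\<And>x y. x \<in> \<Omega> \<Longrightarrow> y \<in> \<Omega> \<Longrightarrow> norm (gF x - gF y) \<le> L * norm (x - y)"
    and "L > 0" and x: "x \<in> \<Omega>" and x_min: "\<And>y. y \<in> \<Omega> \<Longrightarrow> F x \<le> F y"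
  shows "fw_gap \<Omega> gF x \<le> 0"
proof (rule fw_gap_le)
  show "\<Omega> \<noteq> {}" using x by auto
  fix v assume v: "v \<in> \<Omega>"
  define c where "c = inner (v - x) (- gF x)"
  define K where "K = (norm (v - x))\<^sup>2"
  have descent: "s * c \<le> L / 2 * s\<^sup>2 * K" if s: "0 \<le> s" "s \<le> 1" for s
  proof -
    have "x + s *\<^sub>R (v - x) = (1 - s) *\<^sub>R x + s *\<^sub>R v" by (simp add: algebra_simps)
    then have xs: "x + s *\<^sub>R (v - x) \<in> \<Omega>" using convexD_alt[OF \<open>convex \<Omega>\<close> x v] s by simp
    have "F x \<le> F (x + s *\<^sub>R (v - x))" using x_min xs by blast
    also have "\<dots> \<le> F x + inner (gF x) (s *\<^sub>R (v - x)) + L / 2 * (norm (s *\<^sub>R (v - x)))\<^sup>2"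
      using smooth_descent[OF \<open>convex \<Omega>\<close> F_deriv smooth x xs] by simp
    finally show ?thesis
      using s by (simp add: c_def K_def power_mult_distrib inner_commute)
  qed
  show "c \<le> 0"
  proof (rule ccontr)
    assume "\<not> c \<le> 0"
    then have c_pos: "c > 0" by simp
    then have K_pos: "K > 0" using descent[of 1] by (cases "K = 0") (auto simp: K_def)
    define s where "s = min 1 (c / (L * K))"
    have s_pos: "0 < s" and "s \<le> 1" using c_pos K_pos \<open>L > 0\<close> by (auto simp: s_def)
    have "s * (L * K) \<le> c" using K_pos \<open>L > 0\<close> by (simp add: s_def min_def field_simps)
    then have "L / 2 * s\<^sup>2 * K < s * c"
      using s_pos c_pos by (simp add: power2_eq_square field_simps)
    then show False using descent[OF less_imp_le[OF s_pos] \<open>s \<le> 1\<close>] by linarith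
  qed
qed

lemma fw_gap_le_descent_step:
  fixes F :: "'a::real_inner \<Rightarrow> real" and gF :: "'a \<Rightarrow> 'a"
  assumes "convex \<Omega>" and F_deriv: "\<And>x. (F has_derivative (\<lambda>h. inner (gF x) h)) (at x)"
    and smooth: "\<And>x y. x \<in> \<Omega> \<Longrightarrow> y \<in> \<Omega> \<Longrightarrow> norm (gF x - gF y) \<le> L * norm (x - y)"
    and "L \<ge> 0" and diam: "\<And>x y. x \<in> \<Omega> \<Longrightarrow> y \<in> \<Omega> \<Longrightarrow> norm (x - y) \<le> D"
    and x: "x \<in> \<Omega>" and v: "v \<in> \<Omega>" and v_max: "\<And>w. w \<in> \<Omega> \<Longrightarrow> inner w (- g) \<le> inner v (- g)"
    and \<gamma>: "0 < \<gamma>" "\<gamma> \<le> 1"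
  shows "fw_gap \<Omega> gF x
    \<le> (F x - F (x + \<gamma> *\<^sub>R (v - x))) / \<gamma> + L * \<gamma> * D\<^sup>2 / 2 + D * norm (gF x - g)"
proof (rule fw_gap_le)
  show "\<Omega> \<noteq> {}" using x by auto
  define x' where "x' = x + \<gamma> *\<^sub>R (v - x)"
  have "x' = (1 - \<gamma>) *\<^sub>R x + \<gamma> *\<^sub>R v" by (simp add: x'_def algebra_simps)
  then have x': "x' \<in> \<Omega>" using convexD_alt[OF \<open>convex \<Omega>\<close> x v] \<gamma> by simp
  have "F x' \<le> F x + inner (gF x) (x' - x) + L / 2 * (norm (x' - x))\<^sup>2"
    by (rule smooth_descent[OF \<open>convex \<Omega>\<close> F_deriv smooth x x'])
  also have "\<dots> = F x + \<gamma> * inner (gF x) (v - x) + L / 2 * (\<gamma>\<^sup>2 * (norm (v - x))\<^sup>2)"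
    using \<gamma> by (simp add: x'_def power_mult_distrib)
  also have "\<dots> \<le> F x + \<gamma> * inner (gF x) (v - x) + L / 2 * (\<gamma>\<^sup>2 * D\<^sup>2)"
    using \<open>L \<ge> 0\<close> diam[OF v x] by (intro add_left_mono mult_left_mono power_mono) auto
  finally have progress: "- inner (gF x) (v - x) \<le> (F x - F x') / \<gamma> + L * \<gamma> * D\<^sup>2 / 2"
    using \<gamma> by (simp add: field_simps power2_eq_square)
  fix w assume w: "w \<in> \<Omega>"
  have "inner g (v - w) \<le> 0" using v_max[OF w] by (simp add: inner_diff_right inner_commute[of g])
  moreover have "inner (gF x - g) (v - w) \<le> D * norm (gF x - g)"
    using norm_cauchy_schwarz[of "gF x - g" "v - w"] diam[OF v w]
    by (metis mult.commute mult_left_mono norm_ge_zero order_trans)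
  moreover have "inner (w - x) (- gF x) = - inner (gF x) (v - x) + inner g (v - w) + inner (gF x - g) (v - w)"
    by (simp add: inner_diff_left inner_diff_right inner_commute)
  ultimately show "inner (w - x) (- gF x) \<le> (F x - F x') / \<gamma> + L * \<gamma> * D\<^sup>2 / 2 + D * norm (gF x - g)"
    using progress by linarith
qed

lemma integral_norm_sample_mean_deviation_PiM:
  fixes P :: "'z measure" and g :: "'x \<Rightarrow> 'z \<Rightarrow> 'a::euclidean_space" and c :: "('i \<Rightarrow> 'z) \<Rightarrow> 'x"
  assumes P: "prob_space P" and I: "finite I" and J: "J \<subseteq> I" "J \<noteq> {}"
    and c_indep: "\<And>\<omega> \<omega>'. (\<And>i. i \<in> I - J \<Longrightarrow> \<omega> i = \<omega>' i) \<Longrightarrow> c \<omega> = c \<omega>'"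
    and g_meas: "\<And>\<omega>. g (c \<omega>) \<in> borel_measurable P"
    and g_bound: "\<And>\<omega>. AE z in P. norm (g (c \<omega>) z) \<le> B"
    and int: "integrable (PiM I (\<lambda>_. P))
      (\<lambda>\<omega>. norm ((\<integral>z. g (c \<omega>) z \<partial>P) - (1 / real (card J)) *\<^sub>R (\<Sum>j\<in>J. g (c \<omega>) (\<omega> j))))"
  shows "(\<integral>\<omega>. norm ((\<integral>z. g (c \<omega>) z \<partial>P) - (1 / real (card J)) *\<^sub>R (\<Sum>j\<in>J. g (c \<omega>) (\<omega> j)))
      \<partial>PiM I (\<lambda>_. P)) \<le> B / sqrt (real (card J))"
proof -
  interpret P: prob_space P by fact
  interpret product_sigma_finite "\<lambda>_::'i. P"
    unfolding product_sigma_finite_def using P.sigma_finite_measure_axioms by simp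
  define K where "K = I - J"
  define e where "e \<omega> = norm ((\<integral>z. g (c \<omega>) z \<partial>P) - (1 / real (card J)) *\<^sub>R (\<Sum>j\<in>J. g (c \<omega>) (\<omega> j)))"
    for \<omega>
  have I_eq: "I = K \<union> J" and KJ: "K \<inter> J = {}" and fin: "finite K" "finite J"
    using J I by (auto simp: K_def intro: finite_subset)
  have B_nonneg: "B \<ge> 0"
  proof -
    have "AE z in P. 0 \<le> B" using g_bound by eventually_elim (meson norm_ge_zero order_trans)
    then show ?thesis by simp
  qed
  interpret PK: prob_space "PiM K (\<lambda>_. P)" by (rule prob_space_PiM) (rule P)
  have "(\<integral>\<omega>. e \<omega> \<partial>PiM I (\<lambda>_. P))
      = (\<integral>x. (\<integral>y. e (merge K J (x, y)) \<partial>PiM J (\<lambda>_. P)) \<partial>PiM K (\<lambda>_. P))"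
    using product_integral_fold[OF KJ fin, of e] int unfolding I_eq e_def by simp
  also have "\<dots> \<le> (\<integral>x. B / sqrt (real (card J)) \<partial>PiM K (\<lambda>_. P))"
  proof (rule integral_mono')
    fix x :: "'i \<Rightarrow> 'z"
    define \<omega>x where "\<omega>x = merge K J (x, \<lambda>_. undefined)"
    have c_merge: "c (merge K J (x, y)) = c \<omega>x" for y
      unfolding \<omega>x_def by (rule c_indep) (auto simp: merge_def K_def)
    have "e (merge K J (x, y))
        = norm ((\<integral>z. g (c \<omega>x) z \<partial>P) - (1 / real (card J)) *\<^sub>R (\<Sum>j\<in>J. g (c \<omega>x) (y j)))"
      for y :: "'i \<Rightarrow> 'z"
      using KJ by (simp add: e_def c_merge)
    then show "(\<integral>y. e (merge K J (x, y)) \<partial>PiM J (\<lambda>_. P)) \<le> B / sqrt (real (card J))"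
      using integral_norm_sample_mean_deviation[OF P fin(2) J(2) g_meas g_bound] by simp
  qed (use B_nonneg in simp_all)
  also have "\<dots> = B / sqrt (real (card J))" by (simp add: PK.prob_space)
  finally show ?thesis unfolding e_def .
qed

definition minibatch_grad ::
    "('a \<Rightarrow> 'z \<Rightarrow> 'a) \<Rightarrow> (nat \<Rightarrow> nat) \<Rightarrow> (nat \<times> nat \<Rightarrow> 'z) \<Rightarrow> nat \<Rightarrow> 'a \<Rightarrow> 'a::real_vector" where
  "minibatch_grad gf b \<omega> t x = (1 / real (b t)) *\<^sub>R (\<Sum>i<b t. gf x (\<omega> (t, i)))"

lemma sfw_iter_Suc_minibatch_grad:
  "sfw_iter lmo gf x0 \<gamma> b \<omega> (Suc t) = sfw_iter lmo gf x0 \<gamma> b \<omega> t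
    + \<gamma> t *\<^sub>R (lmo t (- minibatch_grad gf b \<omega> t (sfw_iter lmo gf x0 \<gamma> b \<omega> t))
                   - sfw_iter lmo gf x0 \<gamma> b \<omega> t)"
  by (simp add: minibatch_grad_def Let_def)

declare sfw_iter.simps(2) [simp del]

lemma norm_minibatch_grad_le:
  assumes "\<And>i. i < b t \<Longrightarrow> norm (gf x (\<omega> (t, i))) \<le> G" and "0 \<le> G"
  shows "norm (minibatch_grad gf b \<omega> t x) \<le> G"
proof (cases "b t = 0")
  case False
  have "norm (\<Sum>i<b t. gf x (\<omega> (t, i))) \<le> (\<Sum>i<b t. norm (gf x (\<omega> (t, i))))"
    by (rule norm_sum)
  also have "\<dots> \<le> real (b t) * G"
    using sum_bounded_above[of "{..<b t}" "\<lambda>i. norm (gf x (\<omega> (t, i)))" G] assms(1) by simp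
  finally have "norm (\<Sum>i<b t. gf x (\<omega> (t, i))) \<le> real (b t) * G" .
  then show ?thesis using False by (simp add: minibatch_grad_def field_simps)
qed (simp add: minibatch_grad_def \<open>0 \<le> G\<close>)

lemma sfw_iter_in:
  assumes "convex \<Omega>" and "x0 \<in> \<Omega>" and "\<And>t c. lmo t c \<in> \<Omega>" and "\<And>t. 0 \<le> \<gamma> t \<and> \<gamma> t \<le> 1"
  shows "sfw_iter lmo gf x0 \<gamma> b \<omega> t \<in> \<Omega>"
proof (induction t)
  case 0
  then show ?case using assms by simp
next
  case (Suc t)
  define x where "x = sfw_iter lmo gf x0 \<gamma> b \<omega> t"
  define v where "v = lmo t (- minibatch_grad gf b \<omega> t x)"
  have "(1 - \<gamma> t) *\<^sub>R x + \<gamma> t *\<^sub>R v \<in> \<Omega>"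
    using convexD_alt[OF \<open>convex \<Omega>\<close>] Suc.IH assms(3,4) by (simp add: x_def v_def)
  then show ?case
    unfolding sfw_iter_Suc_minibatch_grad x_def[symmetric] v_def[symmetric] by (simp add: algebra_simps)
qed

lemma sfw_iter_cong:
  assumes "\<And>s i. s < t \<Longrightarrow> i < b s \<Longrightarrow> \<omega> (s, i) = \<omega>' (s, i)"
  shows "sfw_iter lmo gf x0 \<gamma> b \<omega> t = sfw_iter lmo gf x0 \<gamma> b \<omega>' t"
  using assms
proof (induction t)
  case 0
  then show ?case by simp
next
  case (Suc t)
  then have "sfw_iter lmo gf x0 \<gamma> b \<omega> t = sfw_iter lmo gf x0 \<gamma> b \<omega>' t" by simp
  moreover have "minibatch_grad gf b \<omega> t x = minibatch_grad gf b \<omega>' t x" for x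
    unfolding minibatch_grad_def using Suc.prems by (intro arg_cong[where f="scaleR _"] sum.cong) auto
  ultimately show ?case unfolding sfw_iter_Suc_minibatch_grad by simp
qed

lemma sfw_iter_zero_step: "sfw_iter lmo gf x0 (\<lambda>_. 0) b \<omega> t = x0"
  by (induction t) (simp_all add: sfw_iter_Suc_minibatch_grad)

lemma sfw_samples_eq: "sfw_samples T b P = PiM (SIGMA t:{..<T}. {..<b t}) (\<lambda>_. P)"
  by (simp add: sfw_samples_def)

lemma prob_space_sfw_samples: "prob_space P \<Longrightarrow> prob_space (sfw_samples T b P)"
  unfolding sfw_samples_eq by (rule prob_space_PiM)

lemma sfw_sample_measurable: "t < T \<Longrightarrow> i < b t \<Longrightarrow> (\<lambda>\<omega>. \<omega> (t, i)) \<in> measurable (sfw_samples T b P) P"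
  unfolding sfw_samples_eq by (rule measurable_component_singleton) simp

locale sfw_problem =
  fixes \<Omega> :: "'a::euclidean_space set" and D L G :: real
    and P :: "'z measure" and \<Xi> :: "'z set"
    and gf :: "'a \<Rightarrow> 'z \<Rightarrow> 'a" and F :: "'a \<Rightarrow> real" and gF :: "'a \<Rightarrow> 'a"
    and lmo :: "nat \<Rightarrow> 'a \<Rightarrow> 'a"
  assumes convex: "convex \<Omega>" and compact: "compact \<Omega>"
    and diam: "\<And>x y. x \<in> \<Omega> \<Longrightarrow> y \<in> \<Omega> \<Longrightarrow> norm (x - y) \<le> D"
    and prob_space_P: "prob_space P" and support: "AE z in P. z \<in> \<Xi>"
    and gf_bound: "\<And>x z. x \<in> \<Omega> \<Longrightarrow> z \<in> \<Xi> \<Longrightarrow> norm (gf x z) \<le> G"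
    and gf_measurable: "(\<lambda>(x, z). gf x z) \<in> borel_measurable (borel \<Otimes>\<^sub>M P)"
    and gF_eq: "\<And>x. gF x = (\<integral>z. gf x z \<partial>P)"
    and F_deriv: "\<And>x. (F has_derivative (\<lambda>h. inner (gF x) h)) (at x)"
    and L_pos: "L > 0"
    and smooth: "\<And>x y. x \<in> \<Omega> \<Longrightarrow> y \<in> \<Omega> \<Longrightarrow> norm (gF x - gF y) \<le> L * norm (x - y)"
    and lmo_in: "\<And>t c. lmo t c \<in> \<Omega>"
    and lmo_max: "\<And>t c v. v \<in> \<Omega> \<Longrightarrow> inner v c \<le> inner (lmo t c) c"
    and lmo_measurable: "\<And>t. lmo t \<in> borel_measurable borel"
begin

sublocale P: prob_space P by (rule prob_space_P)

lemma gf_AE_bound: "x \<in> \<Omega> \<Longrightarrow> AE z in P. norm (gf x z) \<le> G"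
  using support by eventually_elim (rule gf_bound)

lemma G_nonneg:
  assumes "x \<in> \<Omega>" shows "0 \<le> G"
proof -
  have "AE z in P. 0 \<le> G"
    using gf_AE_bound[OF assms] by eventually_elim (rule order_trans[OF norm_ge_zero])
  then show ?thesis by simp
qed

lemma gF_bound:
  assumes "x \<in> \<Omega>" shows "norm (gF x) \<le> G"
proof -
  have "norm (gF x) \<le> (\<integral>z. norm (gf x z) \<partial>P)" unfolding gF_eq by (rule integral_norm_bound)
  also have "\<dots> \<le> (\<integral>z. G \<partial>P)"
    by (rule integral_mono_AE') (use gf_AE_bound[OF assms] G_nonneg[OF assms] in auto)
  finally show ?thesis by (simp add: P.prob_space)
qed

lemma gf_comp_measurable:
  assumes "A \<in> borel_measurable N" and "B \<in> measurable N P"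
  shows "(\<lambda>\<omega>. gf (A \<omega>) (B \<omega>)) \<in> borel_measurable N"
  using measurable_compose[OF measurable_Pair[OF assms] gf_measurable] by simp

lemma gF_measurable: "gF \<in> borel_measurable borel"
proof -
  have "(\<lambda>x. \<integral>z. gf x z \<partial>P) \<in> borel_measurable borel"
    using P.borel_measurable_lebesgue_integral[of "\<lambda>x z. gf x z" borel] gf_measurable by simp
  moreover have "gF = (\<lambda>x. \<integral>z. gf x z \<partial>P)" by (intro ext gF_eq)
  ultimately show ?thesis by simp
qed

lemma F_continuous: "continuous_on UNIV F"
  by (intro continuous_at_imp_continuous_on ballI has_derivative_continuous[OF F_deriv])

lemma F_bounded_on: obtains B where "\<And>x. x \<in> \<Omega> \<Longrightarrow> \<bar>F x\<bar> \<le> B"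
proof -
  have "compact (F ` \<Omega>)"
    by (rule compact_continuous_image[OF continuous_on_subset[OF F_continuous] compact]) simp
  then obtain B where "\<forall>y\<in>F ` \<Omega>. \<bar>y\<bar> \<le> B" by (auto dest!: compact_imp_bounded simp: bounded_real)
  then show ?thesis using that by blast
qed

context
  fixes x0 :: 'a and \<gamma> :: real and T :: nat and b :: "nat \<Rightarrow> nat"
  assumes x0_in: "x0 \<in> \<Omega>" and \<gamma>: "0 \<le> \<gamma>" "\<gamma> \<le> 1"
begin

abbreviation iterate :: "(nat \<times> nat \<Rightarrow> 'z) \<Rightarrow> nat \<Rightarrow> 'a" where
  "iterate \<omega> t \<equiv> sfw_iter lmo gf x0 (\<lambda>_. \<gamma>) b \<omega> t"

abbreviation samples :: "(nat \<times> nat \<Rightarrow> 'z) measure" where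
  "samples \<equiv> sfw_samples T b P"

abbreviation grad_error :: "(nat \<times> nat \<Rightarrow> 'z) \<Rightarrow> nat \<Rightarrow> real" where
  "grad_error \<omega> t \<equiv> norm (gF (iterate \<omega> t) - minibatch_grad gf b \<omega> t (iterate \<omega> t))"

lemma iterate_in: "iterate \<omega> t \<in> \<Omega>"
  by (rule sfw_iter_in[OF convex x0_in lmo_in]) (use \<gamma> in auto)

lemma minibatch_grad_measurable:
  assumes "t < T" and "(\<lambda>\<omega>. x \<omega>) \<in> borel_measurable samples"
  shows "(\<lambda>\<omega>. minibatch_grad gf b \<omega> t (x \<omega>)) \<in> borel_measurable samples"
  unfolding minibatch_grad_def
  by (intro borel_measurable_scaleR borel_measurable_const borel_measurable_sum gf_comp_measurable
      assms(2) sfw_sample_measurable assms(1)) simp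

lemma iterate_measurable: "t \<le> T \<Longrightarrow> (\<lambda>\<omega>. iterate \<omega> t) \<in> borel_measurable samples"
proof (induction t)
  case 0
  then show ?case by simp
next
  case (Suc t)
  then have "t < T" and IH: "(\<lambda>\<omega>. iterate \<omega> t) \<in> borel_measurable samples" by auto
  have "(\<lambda>\<omega>. lmo t (- minibatch_grad gf b \<omega> t (iterate \<omega> t))) \<in> borel_measurable samples"
    by (rule measurable_compose[OF borel_measurable_uminus lmo_measurable])
       (rule minibatch_grad_measurable[OF \<open>t < T\<close> IH])
  then show ?case unfolding sfw_iter_Suc_minibatch_grad
    by (intro borel_measurable_add borel_measurable_scaleR borel_measurable_const borel_measurable_diff IH)
qed

lemma grad_error_AE_bound: "AE \<omega> in samples. \<forall>t<T. grad_error \<omega> t \<le> 2 * G"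
proof -
  have "AE \<omega> in samples. \<forall>j\<in>(SIGMA t:{..<T}. {..<b t}). \<omega> j \<in> \<Xi>"
    unfolding sfw_samples_eq by (rule AE_finite_allI) (auto intro!: AE_PiM_component prob_space_P support)
  then show ?thesis
  proof eventually_elim
    case (elim \<omega>)
    show ?case
    proof (intro allI impI)
      fix t assume "t < T"
      have "norm (minibatch_grad gf b \<omega> t (iterate \<omega> t)) \<le> G"
        using elim \<open>t < T\<close> by (intro norm_minibatch_grad_le gf_bound iterate_in G_nonneg[OF x0_in]) auto
      then show "grad_error \<omega> t \<le> 2 * G"
        using gF_bound[OF iterate_in] norm_triangle_ineq4 by (smt (verit))
    qed
  qed
qed

lemma grad_error_integrable:
  assumes "t < T" shows "integrable samples (\<lambda>\<omega>. grad_error \<omega> t)"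
proof -
  interpret S: prob_space samples by (rule prob_space_sfw_samples[OF prob_space_P])
  have iterate_meas: "(\<lambda>\<omega>. iterate \<omega> t) \<in> borel_measurable samples"
    using assms by (intro iterate_measurable) simp
  have "(\<lambda>\<omega>. grad_error \<omega> t) \<in> borel_measurable samples"
    by (rule measurable_compose[OF borel_measurable_diff borel_measurable_norm]
        measurable_compose[OF iterate_meas gF_measurable] minibatch_grad_measurable assms iterate_meas)+
  then show ?thesis
    using grad_error_AE_bound assms by (intro S.integrable_const_bound[where B="2 * G"]) auto
qed

text \<open>The iterate at round t depends only on the samples of earlier rounds, so conditionally
  on them the minibatch of round t is an i.i.d. sample mean with expectation gF.\<close>
lemma expected_grad_error_le:
  assumes "t < T" and "b t > 0"
  shows "(\<integral>\<omega>. grad_error \<omega> t \<partial>samples) \<le> G / sqrt (real (b t))"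
proof -
  define I where "I = (SIGMA t:{..<T}. {..<b t})"
  define J where "J = {t} \<times> {..<b t}"
  have card_J: "card J = b t" by (simp add: J_def card_cartesian_product)
  have minibatch_eq: "minibatch_grad gf b \<omega> t x = (1 / real (card J)) *\<^sub>R (\<Sum>j\<in>J. gf x (\<omega> j))"
    for \<omega> x
  proof -
    have "J = (\<lambda>i. (t, i)) ` {..<b t}" by (auto simp: J_def)
    then have "(\<Sum>j\<in>J. gf x (\<omega> j)) = (\<Sum>i<b t. gf x (\<omega> (t, i)))"
      by (simp add: sum.reindex inj_on_def)
    then show ?thesis by (simp add: minibatch_grad_def card_J)
  qed
  have "(\<integral>\<omega>. norm ((\<integral>z. gf (iterate \<omega> t) z \<partial>P)
        - (1 / real (card J)) *\<^sub>R (\<Sum>j\<in>J. gf (iterate \<omega> t) (\<omega> j))) \<partial>PiM I (\<lambda>_. P))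
      \<le> G / sqrt (real (card J))"
  proof (rule integral_norm_sample_mean_deviation_PiM[OF prob_space_P])
    show "finite I" and "J \<subseteq> I" and "J \<noteq> {}" using assms by (auto simp: I_def J_def)
    show "iterate \<omega> t = iterate \<omega>' t" if "\<And>i. i \<in> I - J \<Longrightarrow> \<omega> i = \<omega>' i" for \<omega> \<omega>'
      by (rule sfw_iter_cong) (use that assms in \<open>auto simp: I_def J_def\<close>)
    show "gf (iterate \<omega> t) \<in> borel_measurable P" for \<omega>
      using gf_comp_measurable[of "\<lambda>_. iterate \<omega> t" P "\<lambda>z. z"] by (simp add: measurable_ident_sets)
    show "AE z in P. norm (gf (iterate \<omega> t) z) \<le> G" for \<omega>
      by (rule gf_AE_bound[OF iterate_in])
    show "integrable (PiM I (\<lambda>_. P)) (\<lambda>\<omega>. norm ((\<integral>z. gf (iterate \<omega> t) z \<partial>P)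
        - (1 / real (card J)) *\<^sub>R (\<Sum>j\<in>J. gf (iterate \<omega> t) (\<omega> j))))"
      using grad_error_integrable[OF assms(1)] by (simp add: sfw_samples_eq I_def gF_eq minibatch_eq)
  qed
  then show ?thesis by (simp add: sfw_samples_eq I_def gF_eq minibatch_eq card_J)
qed

lemma F_iterate_integrable:
  assumes "t \<le> T" shows "integrable samples (\<lambda>\<omega>. F (iterate \<omega> t))"
proof -
  interpret S: prob_space samples by (rule prob_space_sfw_samples[OF prob_space_P])
  obtain B where "\<And>x. x \<in> \<Omega> \<Longrightarrow> \<bar>F x\<bar> \<le> B" by (metis F_bounded_on)
  moreover have "(\<lambda>\<omega>. F (iterate \<omega> t)) \<in> borel_measurable samples"
    by (rule measurable_compose[OF iterate_measurable[OF assms] borel_measurable_continuous_onI[OF F_continuous]])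
  ultimately show ?thesis by (intro S.integrable_const_bound[where B=B]) (auto intro: iterate_in)
qed

lemma expected_fw_gap_le:
  assumes "t < T" and "\<gamma> > 0" and "b t > 0"
  shows "(\<integral>\<omega>. fw_gap \<Omega> gF (iterate \<omega> t) \<partial>samples)
    \<le> ((\<integral>\<omega>. F (iterate \<omega> t) \<partial>samples) - (\<integral>\<omega>. F (iterate \<omega> (Suc t)) \<partial>samples)) / \<gamma>
       + L * \<gamma> * D\<^sup>2 / 2 + D * (G / sqrt (real (b t)))"
proof -
  interpret S: prob_space samples by (rule prob_space_sfw_samples[OF prob_space_P])
  define bound where "bound \<omega> = (F (iterate \<omega> t) - F (iterate \<omega> (Suc t))) / \<gamma> + L * \<gamma> * D\<^sup>2 / 2
    + D * grad_error \<omega> t" for \<omega>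
  have gap_le: "fw_gap \<Omega> gF (iterate \<omega> t) \<le> bound \<omega>" for \<omega>
    unfolding bound_def sfw_iter_Suc_minibatch_grad
    by (rule fw_gap_le_descent_step[OF convex F_deriv smooth _ diam iterate_in lmo_in lmo_max])
       (use L_pos assms(2) \<gamma> in auto)
  have D_nonneg: "0 \<le> D" using diam[OF x0_in x0_in] by simp
  have bound_integrable: "integrable samples bound"
    unfolding bound_def using F_iterate_integrable grad_error_integrable assms(1) by auto
  have "(\<integral>\<omega>. fw_gap \<Omega> gF (iterate \<omega> t) \<partial>samples) \<le> (\<integral>\<omega>. bound \<omega> \<partial>samples)"
    by (rule integral_mono'[OF bound_integrable gap_le])
       (use gap_le fw_gap_nonneg[OF iterate_in compact_imp_bounded[OF compact]] in \<open>blast intro: order_trans\<close>)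
  also have "\<dots> = ((\<integral>\<omega>. F (iterate \<omega> t) \<partial>samples) - (\<integral>\<omega>. F (iterate \<omega> (Suc t)) \<partial>samples)) / \<gamma>
      + L * \<gamma> * D\<^sup>2 / 2 + D * (\<integral>\<omega>. grad_error \<omega> t \<partial>samples)"
    unfolding bound_def using F_iterate_integrable grad_error_integrable assms(1)
    by (simp add: S.prob_space)
  also have "\<dots> \<le> ((\<integral>\<omega>. F (iterate \<omega> t) \<partial>samples) - (\<integral>\<omega>. F (iterate \<omega> (Suc t)) \<partial>samples)) / \<gamma>
      + L * \<gamma> * D\<^sup>2 / 2 + D * (G / sqrt (real (b t)))"
    using mult_left_mono[OF expected_grad_error_le[OF assms(1,3)] D_nonneg] by simp
  finally show ?thesis .
qed

lemma expected_fw_gap_sum_le: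
  assumes "\<gamma> > 0" and "\<And>t. t < T \<Longrightarrow> b t > 0"
    and "xs \<in> \<Omega>" and "\<And>x. x \<in> \<Omega> \<Longrightarrow> F xs \<le> F x"
  shows "(\<Sum>t<T. \<integral>\<omega>. fw_gap \<Omega> gF (iterate \<omega> t) \<partial>samples)
    \<le> (F x0 - F xs) / \<gamma> + real T * (L * \<gamma> * D\<^sup>2 / 2) + D * (\<Sum>t<T. G / sqrt (real (b t)))"
proof -
  interpret S: prob_space samples by (rule prob_space_sfw_samples[OF prob_space_P])
  define EF where "EF t = (\<integral>\<omega>. F (iterate \<omega> t) \<partial>samples)" for t
  have "EF 0 = F x0" by (simp add: EF_def S.prob_space)
  moreover have "F xs \<le> EF T"
  proof -
    have "(\<integral>\<omega>. F xs \<partial>samples) \<le> EF T"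
      unfolding EF_def by (rule integral_mono) (use F_iterate_integrable assms(4) iterate_in in auto)
    then show ?thesis by (simp add: S.prob_space)
  qed
  ultimately have "(EF 0 - EF T) / \<gamma> \<le> (F x0 - F xs) / \<gamma>"
    using assms(1) by (simp add: divide_right_mono)
  moreover have "(\<Sum>t<T. \<integral>\<omega>. fw_gap \<Omega> gF (iterate \<omega> t) \<partial>samples)
      \<le> (\<Sum>t<T. (EF t - EF (Suc t)) / \<gamma> + L * \<gamma> * D\<^sup>2 / 2 + D * (G / sqrt (real (b t))))"
    unfolding EF_def using expected_fw_gap_le assms(1,2) by (intro sum_mono) auto
  moreover have "\<dots> = (EF 0 - EF T) / \<gamma> + real T * (L * \<gamma> * D\<^sup>2 / 2) + D * (\<Sum>t<T. G / sqrt (real (b t)))"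
    by (simp add: sum.distrib sum_divide_distrib[symmetric] sum_distrib_left sum_lessThan_telescope')
  ultimately show ?thesis by linarith
qed

end

end

lemma constant_step_size_bounds:
  fixes \<Delta> L D \<beta> :: real and T :: nat
  assumes "T \<ge> 1" and "\<Delta> > 0" and "L > 0" and "D > 0" and "\<beta> \<ge> 2 * \<Delta> / (L * D\<^sup>2)"
  shows "0 < sqrt (2 * \<Delta> / (real T * L * D\<^sup>2 * \<beta>))" and "sqrt (2 * \<Delta> / (real T * L * D\<^sup>2 * \<beta>)) \<le> 1"
proof -
  have "0 < 2 * \<Delta> / (L * D\<^sup>2)" using assms(2-4) by simp
  then have "\<beta> > 0" using assms(5) by linarith
  then show "0 < sqrt (2 * \<Delta> / (real T * L * D\<^sup>2 * \<beta>))" using assms(1-4) by simp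
  have "2 * \<Delta> \<le> \<beta> * (L * D\<^sup>2)"
    using assms(3-5) by (simp add: pos_divide_le_eq)
  also have "\<dots> \<le> real T * L * D\<^sup>2 * \<beta>"
    using mult_right_mono[of 1 "real T" "\<beta> * (L * D\<^sup>2)"] assms(1,3) \<open>\<beta> > 0\<close> by (simp add: algebra_simps)
  finally show "sqrt (2 * \<Delta> / (real T * L * D\<^sup>2 * \<beta>)) \<le> 1" using assms(1,3,4) \<open>\<beta> > 0\<close> by simp
qed

lemma constant_step_rate:
  fixes \<Delta> L D G \<beta> :: real and T :: nat
  assumes "T \<ge> 1" and "\<Delta> > 0" and "L > 0" and "D > 0" and "\<beta> > 0"
  defines "\<gamma> \<equiv> sqrt (2 * \<Delta> / (real T * L * D\<^sup>2 * \<beta>))"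
  shows "(1 / real T) * (\<Delta> / \<gamma> + real T * (L * \<gamma> * D\<^sup>2 / 2) + D * (\<Sum>t<T. G / sqrt (real T)))
    \<le> D / sqrt (real T) * (G + sqrt (2 * L * \<Delta> / \<beta>) * (1 + \<beta>))"
proof -
  define r where "r = sqrt (real T)"
  define a where "a = sqrt (L * \<Delta> / (2 * \<beta>))"
  have r_pos: "r > 0" and r_sq: "r\<^sup>2 = real T" using assms(1) by (simp_all add: r_def)
  have a_pos: "a > 0" and a_sq: "a\<^sup>2 = L * \<Delta> / (2 * \<beta>)" using assms(2,3,5) by (simp_all add: a_def)
  have \<Delta>_eq: "\<Delta> = 2 * \<beta> * a\<^sup>2 / L" using a_sq assms(3,5) by (simp add: field_simps)
  have sqrt_eq: "sqrt (2 * L * \<Delta> / \<beta>) = 2 * a"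
    by (rule real_sqrt_unique) (use a_sq a_pos assms(5) in \<open>simp_all add: power_mult_distrib field_simps\<close>)
  have \<gamma>_eq: "\<gamma> = 2 * a / (r * L * D)"
    unfolding \<gamma>_def
    by (rule real_sqrt_unique) (use a_pos r_pos assms(3,4,5) in
        \<open>simp_all add: \<Delta>_eq r_sq[symmetric] power_mult_distrib power_divide field_simps power2_eq_square\<close>)
  have sum_eq: "(\<Sum>t<T. G / sqrt (real T)) = r * G"
    using r_pos r_sq by (simp add: r_def[symmetric] power2_eq_square field_simps)
  text \<open>The step size balances the two terms; the chosen rate is twice the balanced value.\<close>
  have "(1 / real T) * (\<Delta> / \<gamma> + real T * (L * \<gamma> * D\<^sup>2 / 2) + D * (\<Sum>t<T. G / sqrt (real T)))
      = D / r * (G + a * (1 + \<beta>))"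
    unfolding sum_eq \<gamma>_eq \<Delta>_eq
    using assms(1,3,4,5) r_pos a_pos r_sq by (simp add: field_simps power2_eq_square)
  also have "\<dots> \<le> D / r * (G + 2 * a * (1 + \<beta>))"
    using assms(4,5) r_pos a_pos by (intro mult_left_mono) auto
  finally show ?thesis unfolding sqrt_eq r_def by (simp add: mult.assoc)
qed

theorem theorem2:
  fixes \<Omega> :: "(real^'d) set" and D L Gb \<beta> :: real
    and P :: "(real^'p) measure" and \<Xi> :: "(real^'p) set"
    and f :: "real^'d \<Rightarrow> real^'p \<Rightarrow> real" and gf :: "real^'d \<Rightarrow> real^'p \<Rightarrow> real^'d"
    and F :: "real^'d \<Rightarrow> real" and gF :: "real^'d \<Rightarrow> real^'d"
    and xs x0 :: "real^'d" and T :: nat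
    and lmo :: "nat \<Rightarrow> real^'d \<Rightarrow> real^'d"
  assumes \<Omega>_ne: "\<Omega> \<noteq> {}" and \<Omega>_convex: "convex \<Omega>" and \<Omega>_compact: "compact \<Omega>"
    and diam: "\<forall>x\<in>\<Omega>. \<forall>y\<in>\<Omega>. norm (x - y) \<le> D"
    and P_prob: "prob_space P" and P_sets: "sets P = sets borel"
    and P_supp: "AE z in P. z \<in> \<Xi>"
    and f_deriv: "\<forall>z\<in>\<Xi>. \<forall>x. ((\<lambda>y. f y z) has_derivative (\<lambda>h. inner (gf x z) h)) (at x)"
    and gf_bound: "\<forall>x\<in>\<Omega>. \<forall>z\<in>\<Xi>. norm (gf x z) \<le> Gb"
    and gf_meas: "(\<lambda>(x, z). gf x z) \<in> borel_measurable (borel \<Otimes>\<^sub>M P)"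
    and f_int: "\<forall>x. integrable P (\<lambda>z. f x z)"
    and F_def: "\<forall>x. F x = (\<integral>z. f x z \<partial>P)"
    and gF_def: "\<forall>x. gF x = (\<integral>z. gf x z \<partial>P)"
    and F_deriv: "\<forall>x. (F has_derivative (\<lambda>h. inner (gF x) h)) (at x)"
    and L_pos: "L > 0"
    and L_smooth: "\<forall>x\<in>\<Omega>. \<forall>y\<in>\<Omega>. norm (gF x - gF y) \<le> L * norm (x - y)"
    and xs_in: "xs \<in> \<Omega>" and xs_min: "\<forall>x\<in>\<Omega>. F xs \<le> F x"
    and x0_in: "x0 \<in> \<Omega>" and T_pos: "T \<ge> 1"
    and \<beta>_ge: "\<beta> \<ge> 2 * (F x0 - F xs) / (L * D\<^sup>2)" and \<beta>_pos: "\<beta> > 0"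
    and lmo_in: "\<forall>t c. lmo t c \<in> \<Omega>"
    and lmo_max: "\<forall>t c. \<forall>v\<in>\<Omega>. inner v c \<le> inner (lmo t c) c"
    and lmo_meas: "\<forall>t. lmo t \<in> borel_measurable borel"
  shows "(1 / real T) *
           (\<Sum>t<T. \<integral>\<omega>. fw_gap \<Omega> gF
               (sfw_iter lmo gf x0
                  (\<lambda>_. sqrt (2 * (F x0 - F xs) / (real T * L * D\<^sup>2 * \<beta>)))
                  (\<lambda>_. T) \<omega> t)
             \<partial>(sfw_samples T (\<lambda>_. T) P))
         \<le> D / sqrt (real T) * (Gb + sqrt (2 * L * (F x0 - F xs) / \<beta>) * (1 + \<beta>))"
proof -
  text \<open>F enters the argument only through its derivative gF.\<close>
  interpret sfw_problem \<Omega> D L Gb P \<Xi> gf F gF lmo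
    by (rule sfw_problem.intro) (use assms in auto)
  interpret S: prob_space "sfw_samples T (\<lambda>_. T) P"
    by (rule prob_space_sfw_samples[OF P_prob])
  define \<Delta> where "\<Delta> = F x0 - F xs"
  define \<gamma> where "\<gamma> = sqrt (2 * \<Delta> / (real T * L * D\<^sup>2 * \<beta>))"
  have "\<Delta> \<ge> 0" using xs_min x0_in by (simp add: \<Delta>_def)
  have "D \<ge> 0" using diam x0_in by force
  consider "\<Delta> = 0" | "\<Delta> > 0" using \<open>\<Delta> \<ge> 0\<close> by linarith
  then have "(1 / real T) * (\<Sum>t<T. \<integral>\<omega>. fw_gap \<Omega> gF (sfw_iter lmo gf x0 (\<lambda>_. \<gamma>) (\<lambda>_. T) \<omega> t)
      \<partial>sfw_samples T (\<lambda>_. T) P) \<le> D / sqrt (real T) * (Gb + sqrt (2 * L * \<Delta> / \<beta>) * (1 + \<beta>))"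
  proof cases
    case 1
    text \<open>Then x0 is itself a minimiser and the step size vanishes, so every iterate is x0.\<close>
    have "fw_gap \<Omega> gF x0 \<le> 0"
      by (rule fw_gap_nonpos_at_minimum[OF convex F_deriv smooth L_pos x0_in])
         (use 1 xs_min in \<open>auto simp: \<Delta>_def\<close>)
    moreover have "\<gamma> = 0" using 1 by (simp add: \<gamma>_def)
    moreover have "0 \<le> D * Gb / sqrt (real T)" using \<open>D \<ge> 0\<close> G_nonneg[OF x0_in] by simp
    ultimately show ?thesis
      using 1 by (auto simp: sfw_iter_zero_step S.prob_space mult_nonneg_nonpos)
  next
    case 2
    have "D > 0" using 2 diam[OF x0_in xs_in] \<open>D \<ge> 0\<close> by (cases "D = 0") (auto simp: \<Delta>_def)
    note step = constant_step_size_bounds[OF T_pos 2 L_pos \<open>D > 0\<close> \<beta>_ge[folded \<Delta>_def], folded \<gamma>_def]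
    have "(\<Sum>t<T. \<integral>\<omega>. fw_gap \<Omega> gF (sfw_iter lmo gf x0 (\<lambda>_. \<gamma>) (\<lambda>_. T) \<omega> t)
          \<partial>sfw_samples T (\<lambda>_. T) P)
        \<le> \<Delta> / \<gamma> + real T * (L * \<gamma> * D\<^sup>2 / 2) + D * (\<Sum>t<T. Gb / sqrt (real T))"
      unfolding \<Delta>_def
      by (rule expected_fw_gap_sum_le[OF x0_in _ step(2,1) _ xs_in]) (use step T_pos xs_min in auto)
    then show ?thesis
      using order_trans[OF mult_left_mono constant_step_rate[OF T_pos 2 L_pos \<open>D > 0\<close> \<beta>_pos]]
      by (simp add: \<gamma>_def)
  qed
  then show ?thesis by (simp add: \<gamma>_def \<Delta>_def)
qed

end
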